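(* Let $d\ge1$ and $t\ge1$ be integers, $M\ge1$ a real constant, and $f:[0,1]^d\to\mathbb{R}$ any function. Let $\hat f$ be the neural network produced by the construction described in the context. Then for every $\mathbf{p}\in P=\{(i_1,\dots,i_d)/t: i_r\in\mathbb{Z},\ 0\le i_r\le t\}$, $|f(\mathbf{p})-\hat f(\mathbf{p})|=0$.
   Context: Let $\sigma(z)=\max(z,0)$ and $k=(t+1)^d$. For an integer $0\le i\le k-1$ let $\boldsymbol\pi^i=(\pi^i_1,\dots,\pi^i_d)$ be its base-$(t+1)$ digit vector, i.e. $0\le\pi^i_r\le t$ and $i=\sum_{r=1}^d\pi^i_r(t+1)^{d-r}$; then $\{\boldsymbol\pi^i/t\}_{i=0}^{k-1}=P$. For parameters $a_j,b_{1,j},\dots,b_{d,j}$ define the g-unit $\hat g_j(\mathbf{x})=a_j\,\sigma\big(\sum_{r=1}^d -M\sigma(-x_r+b_{r,j})+\tfrac1t\big)$. Construction: set $b=f(\mathbf{0})$; for $i=1,2,\dots,k-1$ in order: let $\hat y=b+\sum_{j=1}^{i-1}\hat g_j(\boldsymbol\pi^i/t)$ (computed with the already fixed parameters), set $b_{r,i}=\pi^i_r/t$ for $r=1,\dots,d$, and set $a_i=t\big(f(\boldsymbol\pi^i/t)-\hat y\big)$. The output is $\hat f(\mathbf{x})=b+\sum_{i=1}^{k-1}\hat g_i(\mathbf{x})$. *)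

theory Defs
  imports Complex_Main
begin

text \<open>Points of [0,1]^d are represented as functions nat \<Rightarrow> real, with coordinates
  indexed by r \<in> {1..d} and all other coordinates equal to 0.\<close>

definition relu :: "real \<Rightarrow> real" where
  "relu z = max z 0"

definition digit :: "nat \<Rightarrow> nat \<Rightarrow> nat \<Rightarrow> nat \<Rightarrow> nat" where
  "digit t d i r = (i div (t+1)^(d-r)) mod (t+1)"

definition gridpt :: "nat \<Rightarrow> nat \<Rightarrow> nat \<Rightarrow> (nat \<Rightarrow> real)" where
  "gridpt t d i = (\<lambda>r. if 1 \<le> r \<and> r \<le> d then real (digit t d i r) / real t else 0)"

definition gridP :: "nat \<Rightarrow> nat \<Rightarrow> (nat \<Rightarrow> real) set" where
  "gridP t d = {p. (\<forall>r\<in>{1..d}. \<exists>i::nat. i \<le> t \<and> p r = real i / real t)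
                 \<and> (\<forall>r. r \<notin> {1..d} \<longrightarrow> p r = 0)}"

definition gunit :: "real \<Rightarrow> nat \<Rightarrow> nat \<Rightarrow> real \<Rightarrow> (nat \<Rightarrow> real) \<Rightarrow> (nat \<Rightarrow> real) \<Rightarrow> real" where
  "gunit M t d a b x = a * relu ((\<Sum>r=1..d. - M * relu (- x r + b r)) + 1 / real t)"

definition partial_net ::
  "((nat \<Rightarrow> real) \<Rightarrow> real) \<Rightarrow> real \<Rightarrow> nat \<Rightarrow> nat \<Rightarrow> (nat \<Rightarrow> real) \<Rightarrow> nat \<Rightarrow> (nat \<Rightarrow> real) \<Rightarrow> real" where
  "partial_net f M t d a i x =
     f (\<lambda>_. 0) + (\<Sum>j\<in>{1..<i}. gunit M t d (a j) (gridpt t d j) x)"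

primrec coeffs :: "((nat \<Rightarrow> real) \<Rightarrow> real) \<Rightarrow> real \<Rightarrow> nat \<Rightarrow> nat \<Rightarrow> nat \<Rightarrow> (nat \<Rightarrow> real)" where
  "coeffs f M t d 0 = (\<lambda>_. 0)"
| "coeffs f M t d (Suc n) =
     (coeffs f M t d n)(Suc n :=
        real t * (f (gridpt t d (Suc n))
                  - partial_net f M t d (coeffs f M t d n) (Suc n) (gridpt t d (Suc n))))"

definition fhat :: "((nat \<Rightarrow> real) \<Rightarrow> real) \<Rightarrow> real \<Rightarrow> nat \<Rightarrow> nat \<Rightarrow> (nat \<Rightarrow> real) \<Rightarrow> real" where
  "fhat f M t d x =
     (let k = (t+1)^d; a = coeffs f M t d (k - 1)
      in f (\<lambda>_. 0) + (\<Sum>i\<in>{1..k-1}. gunit M t d (a i) (gridpt t d i) x))"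

end

theory Submission
  imports Defs
begin

text \<open>Grid points are enumerated by their base-(t+1) index i, and the unit attached to
  pi^j, evaluated at pi^i/t, equals a_j/t if pi^j <= pi^i componentwise and 0 otherwise:
  a single coordinate with a gap of 1/t already pushes the ReLU argument below 0 because
  M >= 1. Componentwise <= of digit vectors implies j <= i, so at pi^i/t only the bias and
  the units 1, ..., i are active, and a_i was chosen exactly to cancel the residual left
  there by the units before it.\<close>

lemma sum_base_digits:
  fixes B :: nat
  assumes "i < B ^ d"
  shows "(\<Sum>r=1..d. (i div B ^ (d - r)) mod B * B ^ (d - r)) = i"
  using assms
proof (induction d arbitrary: i)
  case 0
  then show ?case by simp
next
  case (Suc d)
  have "B > 0" using Suc.prems by (cases "B = 0") auto
  then have "i div B < B ^ d"
    using Suc.prems by (simp add: div_less_iff_less_mult mult.commute)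
  have "(\<Sum>r=1..d. (i div B ^ (Suc d - r)) mod B * B ^ (Suc d - r))
      = B * (\<Sum>r=1..d. (i div B div B ^ (d - r)) mod B * B ^ (d - r))"
    unfolding sum_distrib_left
    by (rule sum.cong) (auto simp: Suc_diff_le div_mult2_eq)
  also have "\<dots> = B * (i div B)"
    using Suc.IH[OF \<open>i div B < B ^ d\<close>] by simp
  finally show ?case by simp
qed

lemma le_if_base_digits_le:
  fixes B :: nat
  assumes "i < B ^ d" and "j < B ^ d"
    and "\<forall>r\<in>{1..d}. (j div B ^ (d - r)) mod B \<le> (i div B ^ (d - r)) mod B"
  shows "j \<le> i"
proof -
  have "j = (\<Sum>r=1..d. (j div B ^ (d - r)) mod B * B ^ (d - r))"
    using sum_base_digits[OF assms(2)] by simp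
  also have "\<dots> \<le> (\<Sum>r=1..d. (i div B ^ (d - r)) mod B * B ^ (d - r))"
    using assms(3) by (intro sum_mono) simp
  also have "\<dots> = i"
    using sum_base_digits[OF assms(1)] .
  finally show ?thesis .
qed

lemma base_digits_of_sum:
  fixes B :: nat
  assumes "\<forall>r\<in>{1..d}. c r < B"
  defines "i \<equiv> \<Sum>r=1..d. c r * B ^ (d - r)"
  shows "i < B ^ d \<and> (\<forall>r\<in>{1..d}. (i div B ^ (d - r)) mod B = c r)"
  using assms(1) unfolding i_def
proof (induction d)
  case 0
  then show ?case by simp
next
  case (Suc d)
  define s where "s = (\<Sum>r=1..d. c r * B ^ (d - r))"
  have IH: "s < B ^ d" "\<forall>r\<in>{1..d}. (s div B ^ (d - r)) mod B = c r"
    using Suc by (auto simp: s_def)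
  have last: "c (Suc d) < B"
    using Suc.prems by auto
  have "(\<Sum>r=1..d. c r * B ^ (Suc d - r)) = B * s"
    unfolding s_def sum_distrib_left by (rule sum.cong) (auto simp: Suc_diff_le)
  then have sum_eq: "(\<Sum>r=1..Suc d. c r * B ^ (Suc d - r)) = B * s + c (Suc d)"
    by simp
  have "B * s + c (Suc d) < B * (s + 1)"
    using last by simp
  also have "\<dots> \<le> B * B ^ d"
    using IH(1) by (intro mult_left_mono) simp_all
  finally have "B * s + c (Suc d) < B ^ Suc d"
    by simp
  moreover have "((B * s + c (Suc d)) div B ^ (Suc d - r)) mod B = c r" if "r \<in> {1..Suc d}" for r
  proof (cases "r = Suc d")
    case True
    then show ?thesis using last by simp
  next
    case False
    with that have "r \<in> {1..d}" by simp
    then have "(B * s + c (Suc d)) div B ^ (Suc d - r) = s div B ^ (d - r)"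
      using last by (simp add: Suc_diff_le div_mult2_eq)
    then show ?thesis
      using IH(2) \<open>r \<in> {1..d}\<close> by simp
  qed
  ultimately show ?case
    using sum_eq by simp
qed

lemma gridP_subset_gridpt: "gridP t d \<subseteq> gridpt t d ` {..<(t + 1) ^ d}"
proof
  fix p
  assume "p \<in> gridP t d"
  then have "\<forall>r\<in>{1..d}. \<exists>i::nat. i \<le> t \<and> p r = real i / real t"
    and outside: "\<forall>r. r \<notin> {1..d} \<longrightarrow> p r = 0"
    by (auto simp: gridP_def)
  then obtain c where c: "\<forall>r\<in>{1..d}. c r \<le> t \<and> p r = real (c r) / real t"
    by metis
  define i where "i = (\<Sum>r=1..d. c r * (t + 1) ^ (d - r))"
  have "\<forall>r\<in>{1..d}. c r < t + 1"
    using c by auto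
  then have "i < (t + 1) ^ d \<and> (\<forall>r\<in>{1..d}. digit t d i r = c r)"
    unfolding i_def digit_def by (rule base_digits_of_sum)
  then have "i < (t + 1) ^ d" and digits: "\<forall>r\<in>{1..d}. digit t d i r = c r"
    by simp_all
  have "gridpt t d i = p"
  proof
    fix r
    show "gridpt t d i r = p r"
      using c digits outside by (simp add: gridpt_def)
  qed
  with \<open>i < (t + 1) ^ d\<close> show "p \<in> gridpt t d ` {..<(t + 1) ^ d}"
    by blast
qed

lemma gridpt_0: "gridpt t d 0 = (\<lambda>_. 0)"
  by (auto simp: gridpt_def digit_def)

lemma gunit_eq_if_le:
  assumes "\<forall>r\<in>{1..d}. b r \<le> x r"
  shows "gunit M t d a b x = a / real t"
proof -
  have "(\<Sum>r=1..d. - M * relu (- x r + b r)) = 0"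
    using assms by (intro sum.neutral) (simp add: relu_def)
  then show ?thesis
    by (simp add: gunit_def relu_def)
qed

lemma gunit_eq_0_if_gap:
  assumes "M \<ge> 1" and "r0 \<in> {1..d}" and "x r0 + 1 / real t \<le> b r0"
  shows "gunit M t d a b x = 0"
proof -
  let ?u = "\<lambda>r. - M * relu (- x r + b r)"
  have "1 / real t \<le> relu (- x r0 + b r0)"
    using assms(3) by (simp add: relu_def)
  also have "\<dots> \<le> M * relu (- x r0 + b r0)"
    using assms(1) by (intro mult_le_cancel_right1[THEN iffD2]) (simp add: relu_def)
  finally have "?u r0 \<le> - (1 / real t)"
    by simp
  moreover have "(\<Sum>r\<in>{1..d} - {r0}. ?u r) \<le> 0"
    using assms(1) by (intro sum_nonpos) (simp add: relu_def)
  moreover have "(\<Sum>r=1..d. ?u r) = ?u r0 + (\<Sum>r\<in>{1..d} - {r0}. ?u r)"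
    using assms(2) by (simp add: sum.remove)
  ultimately have "(\<Sum>r=1..d. ?u r) + 1 / real t \<le> 0"
    by linarith
  then show ?thesis
    by (simp add: gunit_def relu_def)
qed

lemma gunit_gridpt_vanishes:
  assumes "t \<ge> 1" and "M \<ge> 1" and "i < j" and "j < (t + 1) ^ d"
  shows "gunit M t d a (gridpt t d j) (gridpt t d i) = 0"
proof -
  obtain r0 where r0: "r0 \<in> {1..d}" and "digit t d i r0 < digit t d j r0"
    using le_if_base_digits_le[of i "t + 1" d j] assms(3,4)
    by (force simp: digit_def not_le)
  then have "real (digit t d i r0) + 1 \<le> real (digit t d j r0)"
    by simp
  then have "gridpt t d i r0 + 1 / real t \<le> gridpt t d j r0"
    using r0 assms(1) by (simp add: gridpt_def divide_right_mono flip: add_divide_distrib)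
  with assms(2) r0 show ?thesis
    by (rule gunit_eq_0_if_gap)
qed

lemma fhat_eq_partial_net:
  "fhat f M t d x = partial_net f M t d (coeffs f M t d ((t + 1) ^ d - 1)) ((t + 1) ^ d) x"
proof -
  have "{1..(t + 1) ^ d - 1} = {1..<(t + 1) ^ d}"
    by auto
  then show ?thesis
    unfolding fhat_def partial_net_def Let_def by (simp only:)
qed

lemma partial_net_gridpt_truncate:
  assumes "t \<ge> 1" and "M \<ge> 1" and "i < n" and "n \<le> (t + 1) ^ d"
  shows "partial_net f M t d a n (gridpt t d i) = partial_net f M t d a (Suc i) (gridpt t d i)"
proof -
  have "(\<Sum>j\<in>{1..<n}. gunit M t d (a j) (gridpt t d j) (gridpt t d i))
      = (\<Sum>j\<in>{1..<Suc i}. gunit M t d (a j) (gridpt t d j) (gridpt t d i))"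
    using assms by (intro sum.mono_neutral_right) (auto intro: gunit_gridpt_vanishes)
  then show ?thesis
    by (simp add: partial_net_def)
qed

lemma partial_net_Suc_gridpt_self:
  assumes "i \<ge> 1"
  shows "partial_net f M t d a (Suc i) (gridpt t d i)
       = partial_net f M t d a i (gridpt t d i) + a i / real t"
  using assms by (simp add: partial_net_def gunit_eq_if_le atLeastLessThanSuc)

lemma partial_net_cong:
  "(\<And>j. j < i \<Longrightarrow> a j = a' j) \<Longrightarrow> partial_net f M t d a i x = partial_net f M t d a' i x"
  unfolding partial_net_def by (intro arg_cong2[where f = "(+)"] refl sum.cong) auto

lemma coeffs_stable: "j \<le> m \<Longrightarrow> coeffs f M t d m j = coeffs f M t d j j"
  by (induction m) (auto simp: le_Suc_eq)

lemma coeffs_eq_residual: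
  assumes "1 \<le> i" and "i \<le> m"
  shows "coeffs f M t d m i
       = real t * (f (gridpt t d i) - partial_net f M t d (coeffs f M t d m) i (gridpt t d i))"
proof -
  obtain n where n: "i = Suc n"
    using assms(1) by (cases i) auto
  have "partial_net f M t d (coeffs f M t d n) i (gridpt t d i)
      = partial_net f M t d (coeffs f M t d m) i (gridpt t d i)"
  proof (rule partial_net_cong)
    fix j
    assume "j < i"
    then show "coeffs f M t d n j = coeffs f M t d m j"
      using n assms(2) coeffs_stable[of j n] coeffs_stable[of j m] by simp
  qed
  moreover have "coeffs f M t d m i = coeffs f M t d (Suc n) (Suc n)"
    using n assms(2) coeffs_stable[of i m] by simp
  ultimately show ?thesis
    using n by simp
qed

lemma fhat_gridpt:
  assumes "t \<ge> 1" and "M \<ge> 1" and "i < (t + 1) ^ d"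
  shows "fhat f M t d (gridpt t d i) = f (gridpt t d i)"
proof -
  define a where "a = coeffs f M t d ((t + 1) ^ d - 1)"
  have "fhat f M t d (gridpt t d i) = partial_net f M t d a (Suc i) (gridpt t d i)"
    unfolding fhat_eq_partial_net a_def using assms
    by (intro partial_net_gridpt_truncate) simp_all
  also have "\<dots> = f (gridpt t d i)"
  proof (cases "i = 0")
    case True
    then show ?thesis by (simp add: partial_net_def gridpt_0)
  next
    case False
    then have "a i = real t * (f (gridpt t d i) - partial_net f M t d a i (gridpt t d i))"
      unfolding a_def using assms(3) by (intro coeffs_eq_residual) simp_all
    then show ?thesis
      using False assms(1) by (simp add: partial_net_Suc_gridpt_self)
  qed
  finally show ?thesis .
qed

theorem lemmaA1:
  fixes d t :: nat and M :: real and f :: "(nat \<Rightarrow> real) \<Rightarrow> real" and p :: "nat \<Rightarrow> real"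
  assumes "d \<ge> 1" and "t \<ge> 1" and "M \<ge> 1"
    and "p \<in> gridP t d"
  shows "\<bar>f p - fhat f M t d p\<bar> = 0"
proof -
  obtain i where "i < (t + 1) ^ d" and "gridpt t d i = p"
    using gridP_subset_gridpt assms(4) by blast
  with fhat_gridpt[OF assms(2,3), of i d f] show ?thesis
    by simp
qed

end
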